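(* Under the Setting below, let $\{x^k\}_{k\ge0}$ be generated by Algorithm 1 with extrapolation weights satisfying $0\le\omega_k\le\omega<1$. Then: (1) $\{x^k\}$ is bounded; (2) every cluster point of $\{x^k\}$ is a local minimizer of $H$; (3) $H(x^k)\to H(x^* )$, where $x^*$ is any cluster point of $\{x^k\}$; (4) if moreover $\omega_k\equiv\omega\in(0,1)$ for all $k$, then the whole sequence $\{x^k\}$ converges (to a local minimizer of $H$).
   Context: Setting. Let $\lambda>0$, $l,u\in\mathbb{R}^n$ with $l\le u$ componentwise, $X=\{x\in\mathbb{R}^n: l\le x\le u\}$, and $\delta_X$ the indicator function of $X$ ($0$ on $X$, $+\infty$ outside). For $x\in\mathbb{R}^n$, $\|x\|_0$ is the number of nonzero components of $x$ and $I(x)=\{i: x_i=0\}$. Let $f:\mathbb{R}^n\to\mathbb{R}$ be convex and differentiable, bounded from below on $X$, with $\nabla f$ $L$-Lipschitz continuous on $X$ ($L>0$). Define $H(x)=\lambda\|x\|_0+f(x)+\delta_X(x)$. Algorithm 1. Choose $\mu>0$, extrapolation weights $0\le\omega_k\le\omega<1$, and a starting point $x^0\in X$; set $x^{-1}=x^0$. For $k=0,1,2,\dots$: define $y^{k+1}\in\mathbb{R}^n$ by $y^{k+1}_i=x^k_i+\omega_k(x^k_i-x^{k-1}_i)$ for $i\notin I(x^k)$ and $y^{k+1}_i=x^k_i\,(=0)$ for $i\in I(x^k)$ (extrapolation only on the support of $x^k$); if $\langle y^{k+1}-x^k,\nabla f(y^{k+1})\rangle>0$ or $y^{k+1}\notin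 X$, reset $y^{k+1}:=x^k$; then take any $$x^{k+1}\in\arg\min_{x\in X}\ \lambda\|x\|_0+\frac{L}{2}\Big\|x-y^{k+1}+\frac1L\nabla f(y^{k+1})\Big\|^2+\frac{\mu}{2}\|x-y^{k+1}\|^2 .$$ A local minimizer of $H$ is a point $x^*\in X$ such that $H(x)\ge H(x^* )$ for all $x$ in some neighborhood of $x^*$. *)

theory Defs
  imports "HOL-Analysis.Analysis"
begin

definition box_set :: "real^'n \<Rightarrow> real^'n \<Rightarrow> (real^'n) set" where
  "box_set l u = {x. \<forall>i. l $ i \<le> x $ i \<and> x $ i \<le> u $ i}"

definition l0norm :: "real^'n \<Rightarrow> nat" where
  "l0norm x = card {i. x $ i \<noteq> 0}"

definition ind_fun :: "'a set \<Rightarrow> 'a \<Rightarrow> ereal" where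
  "ind_fun S x = (if x \<in> S then 0 else \<infinity>)"

definition Hfun :: "real \<Rightarrow> (real^'n \<Rightarrow> real) \<Rightarrow> real^'n \<Rightarrow> real^'n \<Rightarrow> real^'n \<Rightarrow> ereal" where
  "Hfun lam f l u x = ereal (lam * real (l0norm x) + f x) + ind_fun (box_set l u) x"

definition local_minimizer :: "(real^'n \<Rightarrow> ereal) \<Rightarrow> (real^'n) set \<Rightarrow> real^'n \<Rightarrow> bool" where
  "local_minimizer H X xs \<longleftrightarrow> xs \<in> X \<and> (\<exists>e>0. \<forall>x. dist x xs < e \<longrightarrow> H x \<ge> H xs)"

definition cluster_point :: "(nat \<Rightarrow> 'a::topological_space) \<Rightarrow> 'a \<Rightarrow> bool" where
  "cluster_point x p \<longleftrightarrow> (\<exists>r. strict_mono r \<and> (x \<circ> r) \<longlonglongrightarrow> p)"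

definition prev_it :: "(nat \<Rightarrow> 'a) \<Rightarrow> nat \<Rightarrow> 'a" where
  "prev_it x k = (if k = 0 then x 0 else x (k - 1))"

definition extrap :: "(nat \<Rightarrow> real) \<Rightarrow> (nat \<Rightarrow> real^'n) \<Rightarrow> nat \<Rightarrow> real^'n" where
  "extrap w x k = (\<chi> i. if x k $ i \<noteq> 0 then x k $ i + w k * (x k $ i - prev_it x k $ i) else x k $ i)"

text \<open>y^{k+1} after the possible reset.\<close>
definition y_it :: "(real^'n \<Rightarrow> real^'n) \<Rightarrow> (real^'n) set \<Rightarrow> (nat \<Rightarrow> real) \<Rightarrow> (nat \<Rightarrow> real^'n) \<Rightarrow> nat \<Rightarrow> real^'n" where
  "y_it g X w x k = (let y = extrap w x k in
     if inner (y - x k) (g y) > 0 \<or> y \<notin> X then x k else y)"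

definition sub_obj :: "real \<Rightarrow> real \<Rightarrow> real \<Rightarrow> (real^'n \<Rightarrow> real^'n) \<Rightarrow> real^'n \<Rightarrow> real^'n \<Rightarrow> real" where
  "sub_obj lam L mu g y z = lam * real (l0norm z) + L / 2 * (norm (z - y + (1 / L) *\<^sub>R g y))\<^sup>2
      + mu / 2 * (norm (z - y))\<^sup>2"

text \<open>x is a sequence generated by Algorithm 1 (with arbitrary choice of minimizer).\<close>
definition alg1_seq :: "real \<Rightarrow> (real^'n \<Rightarrow> real^'n) \<Rightarrow> real^'n \<Rightarrow> real^'n \<Rightarrow> real \<Rightarrow> real
     \<Rightarrow> (nat \<Rightarrow> real) \<Rightarrow> (nat \<Rightarrow> real^'n) \<Rightarrow> bool" where
  "alg1_seq lam g l u L mu w x \<longleftrightarrow> x 0 \<in> box_set l u \<and>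
     (\<forall>k. x (Suc k) \<in> box_set l u \<and>
        (\<forall>z \<in> box_set l u. sub_obj lam L mu g (y_it g (box_set l u) w x k) (x (Suc k))
                            \<le> sub_obj lam L mu g (y_it g (box_set l u) w x k) z))"

end

theory Submission
  imports Defs
begin

text \<open>Sufficient decrease of \<open>F = lam \<parallel>\<cdot>\<parallel>\<^sub>0 + f\<close> makes the residuals \<open>x\<^sup>k\<^sup>+\<^sup>1 - y\<^sup>k\<^sup>+\<^sup>1\<close> square
  summable. Comparing \<open>x\<^sup>k\<^sup>+\<^sup>1\<close> with the same point with one entry set to zero shows that its
  nonzero entries (in coordinates with \<open>0 \<in> [l\<^sub>i, u\<^sub>i]\<close>) are bounded away from zero; since the
  residuals vanish and \<open>y\<^sup>k\<^sup>+\<^sup>1\<close> has no more nonzeros than \<open>x\<^sup>k\<close>, the supports eventually shrink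
  and hence stabilize at some \<open>S\<close>. From then on the iteration is an inertial proximal gradient
  method for minimizing \<open>f\<close> over the convex set \<open>C = {z \<in> X. supp z \<subseteq> S}\<close>: every cluster point
  \<open>p\<close> has support exactly \<open>S\<close> and minimizes \<open>f\<close> over \<open>C\<close>, which makes it a local minimizer of
  \<open>H\<close>, because points of \<open>X\<close> near \<open>p\<close> either lie in \<open>C\<close> or pay at least \<open>lam\<close> more in the
  \<open>\<ell>\<^sub>0\<close> term. If \<open>0 < om\<close>, a Fej\'er-type estimate for \<open>\<parallel>x\<^sup>k - p\<parallel>\<^sup>2\<close> combined with the
  inertial recursion makes this distance convergent, and along the subsequence it tends to \<open>0\<close>.\<close>

lemma has_real_derivative_along_line:
  fixes f :: "'a::real_inner \<Rightarrow> real"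
  assumes grad: "\<forall>z. (f has_derivative (\<lambda>h. inner (g z) h)) (at z)"
  shows "((\<lambda>t. f (a + t *\<^sub>R d)) has_real_derivative inner (g (a + t *\<^sub>R d)) d) (at t)"
proof -
  have "((\<lambda>t. a + t *\<^sub>R d) has_derivative (\<lambda>h. h *\<^sub>R d)) (at t)"
    by (auto intro!: derivative_eq_intros)
  from has_derivative_compose[OF this grad[rule_format]]
  have "((\<lambda>t. f (a + t *\<^sub>R d)) has_derivative (\<lambda>h. h * inner (g (a + t *\<^sub>R d)) d)) (at t)"
    by (simp add: o_def)
  moreover have "(\<lambda>h. h * inner (g (a + t *\<^sub>R d)) d) = (*) (inner (g (a + t *\<^sub>R d)) d)"
    by (simp add: fun_eq_iff mult.commute)
  ultimately show ?thesis
    by (simp add: has_field_derivative_def)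
qed

lemma convex_on_gradient_inequality:
  fixes f :: "'a::real_inner \<Rightarrow> real"
  assumes cvx: "convex_on UNIV f"
    and grad: "\<forall>z. (f has_derivative (\<lambda>h. inner (g z) h)) (at z)"
  shows "f p + inner (g p) (z - p) \<le> f z"
proof -
  define \<phi> where "\<phi> t = f (p + t *\<^sub>R (z - p))" for t
  have "convex_on UNIV \<phi>"
  proof (rule convex_onI)
    fix t s r :: real assume "0 < t" "t < 1"
    have "p + ((1 - t) *\<^sub>R s + t *\<^sub>R r) *\<^sub>R (z - p)
        = (1 - t) *\<^sub>R (p + s *\<^sub>R (z - p)) + t *\<^sub>R (p + r *\<^sub>R (z - p))"
      by (simp add: algebra_simps)
    then show "\<phi> ((1 - t) *\<^sub>R s + t *\<^sub>R r) \<le> (1 - t) * \<phi> s + t * \<phi> r"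
      unfolding \<phi>_def using convex_onD[OF cvx, of t] \<open>0 < t\<close> \<open>t < 1\<close> by simp
  qed simp
  moreover have "(\<phi> has_real_derivative inner (g p) (z - p)) (at 0 within UNIV)"
    unfolding \<phi>_def using has_real_derivative_along_line[OF grad, of p "z - p" 0] by simp
  ultimately have "inner (g p) (z - p) * (1 - 0) \<le> \<phi> 1 - \<phi> 0"
    by (intro convex_on_imp_above_tangent) auto
  then show ?thesis unfolding \<phi>_def by simp
qed

lemma descent_lemma:
  fixes f :: "'a::real_inner \<Rightarrow> real"
  assumes grad: "\<forall>z. (f has_derivative (\<lambda>h. inner (g z) h)) (at z)"
    and "convex X" and lip: "L-lipschitz_on X g"
    and a: "a \<in> X" and b: "b \<in> X"
  shows "f b \<le> f a + inner (g a) (b - a) + L / 2 * (norm (b - a))\<^sup>2"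
proof -
  define d where "d = b - a"
  define \<phi> where "\<phi> t = f (a + t *\<^sub>R d) - t * inner (g a) d - L / 2 * t\<^sup>2 * (norm d)\<^sup>2" for t
  have "\<phi> 1 \<le> \<phi> 0"
  proof (rule DERIV_nonpos_imp_nonincreasing[of 0 1 \<phi>])
    fix t :: real assume t: "0 \<le> t" "t \<le> 1"
    have D: "(\<phi> has_real_derivative
        inner (g (a + t *\<^sub>R d)) d - inner (g a) d - L * t * (norm d)\<^sup>2) (at t)"
      unfolding \<phi>_def by (rule derivative_eq_intros has_real_derivative_along_line[OF grad] | simp)+
    have "a + t *\<^sub>R d = (1 - t) *\<^sub>R a + t *\<^sub>R b"
      by (simp add: d_def algebra_simps)
    then have mem: "a + t *\<^sub>R d \<in> X"
      using convexD[OF \<open>convex X\<close> a b, of "1 - t" t] t by simp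
    have "inner (g (a + t *\<^sub>R d)) d - inner (g a) d = inner (g (a + t *\<^sub>R d) - g a) d"
      by (simp add: inner_diff_left)
    also have "\<dots> \<le> norm (g (a + t *\<^sub>R d) - g a) * norm d"
      by (rule norm_cauchy_schwarz)
    also have "\<dots> \<le> L * norm (t *\<^sub>R d) * norm d"
      using lipschitz_on_normD[OF lip mem a] by (intro mult_right_mono) auto
    also have "\<dots> = L * t * (norm d)\<^sup>2"
      using t by (simp add: power2_eq_square)
    finally show "\<exists>y. (\<phi> has_real_derivative y) (at t) \<and> y \<le> 0"
      using D by auto
  qed simp
  then show ?thesis unfolding \<phi>_def d_def by simp
qed

lemma power2_norm_add:
  fixes a e :: "'a::real_inner"
  shows "(norm (a + e))\<^sup>2 = (norm a)\<^sup>2 + 2 * inner a e + (norm e)\<^sup>2"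
  by (simp add: power2_norm_eq_inner inner_add_left inner_add_right inner_commute)

lemma power2_norm_extrapolate:
  fixes a b p :: "'a::real_inner"
  shows "(norm (a + t *\<^sub>R (a - b) - p))\<^sup>2
    = (norm (a - p))\<^sup>2 + t * ((norm (a - p))\<^sup>2 - (norm (b - p))\<^sup>2) + (t + t\<^sup>2) * (norm (a - b))\<^sup>2"
proof -
  have combine: "X = nA + t * (nA - nB) + (t + t\<^sup>2) * M"
    if "X = nA + 2 * t * I + t\<^sup>2 * M" "nB = nA - 2 * I + M" for X nA nB I M :: real
    unfolding that by (simp add: algebra_simps power2_eq_square)
  define A B where "A = a - p" and "B = b - p"
  have "a + t *\<^sub>R (a - b) - p = A + t *\<^sub>R (A - B)" "a - b = A - B"
    by (simp_all add: A_def B_def algebra_simps)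
  moreover have "(norm (A + t *\<^sub>R (A - B)))\<^sup>2 = (norm A)\<^sup>2 + 2 * t * inner A (A - B) + t\<^sup>2 * (norm (A - B))\<^sup>2"
    by (simp only: power2_norm_add inner_scaleR_right norm_scaleR power_mult_distrib power2_abs mult.assoc)
  moreover have "(norm B)\<^sup>2 = (norm A)\<^sup>2 - 2 * inner A (A - B) + (norm (A - B))\<^sup>2"
    using power2_norm_add[of A "- (A - B)"] by (simp add: norm_minus_commute inner_diff_right)
  ultimately show ?thesis
    unfolding A_def[symmetric] B_def[symmetric] by (simp only: combine)
qed

definition prox_model :: "real \<Rightarrow> real \<Rightarrow> 'a::real_normed_vector \<Rightarrow> 'a \<Rightarrow> 'a \<Rightarrow> real" where
  "prox_model L mu gy y z = L / 2 * (norm (z - y + (1 / L) *\<^sub>R gy))\<^sup>2 + mu / 2 * (norm (z - y))\<^sup>2"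

lemma sub_obj_eq_prox_model:
  "sub_obj lam L mu g y z = lam * real (l0norm z) + prox_model L mu (g y) y z"
  by (simp add: sub_obj_def prox_model_def)

lemma prox_model_expansion:
  fixes x y z gy :: "'a::real_inner"
  assumes "L \<noteq> 0"
  shows "prox_model L mu gy y z = prox_model L mu gy y x
    + inner ((L + mu) *\<^sub>R (x - y) + gy) (z - x) + (L + mu) / 2 * (norm (z - x))\<^sup>2"
proof -
  have expand: "L / 2 * (norm (a + e))\<^sup>2 + mu / 2 * (norm (b + e))\<^sup>2
      = L / 2 * (norm a)\<^sup>2 + mu / 2 * (norm b)\<^sup>2 + inner ((L + mu) *\<^sub>R b + gy) e
        + (L + mu) / 2 * (norm e)\<^sup>2"
    if "L * inner a e = L * inner b e + inner gy e" for a b e :: 'a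
    using that by (simp add: power2_norm_add inner_add_left algebra_simps)
  have "L * inner (x - y + (1 / L) *\<^sub>R gy) (z - x) = L * inner (x - y) (z - x) + inner gy (z - x)"
    using assms by (simp add: inner_add_left distrib_left)
  from expand[OF this]
  show ?thesis
    unfolding prox_model_def by (simp add: algebra_simps)
qed

lemma box_set_eq_cbox: "box_set l u = cbox l u"
  by (auto simp: box_set_def mem_box_cart)

lemma convex_box_set: "convex (box_set l u)"
  and compact_box_set: "compact (box_set l u)"
  by (simp_all add: box_set_eq_cbox)

definition supp_vec :: "real^'n \<Rightarrow> 'n set" where
  "supp_vec v = {i. v $ i \<noteq> 0}"

lemma l0norm_eq_card_supp_vec: "l0norm v = card (supp_vec v)"
  by (simp add: l0norm_def supp_vec_def)

lemma convex_supp_vec_subset: "convex {v. supp_vec v \<subseteq> S}"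
proof (rule convexI)
  fix v w and s t :: real
  assume "v \<in> {v. supp_vec v \<subseteq> S}" "w \<in> {v. supp_vec v \<subseteq> S}"
  then have zero: "v $ i = 0" "w $ i = 0" if "i \<notin> S" for i
    using that by (auto simp: supp_vec_def)
  have "i \<in> S" if "i \<in> supp_vec (s *\<^sub>R v + t *\<^sub>R w)" for i
    using that zero[of i] by (cases "i \<in> S") (auto simp: supp_vec_def)
  then show "s *\<^sub>R v + t *\<^sub>R w \<in> {v. supp_vec v \<subseteq> S}"
    by blast
qed

lemma nonneg_if_perturbations_nonneg:
  fixes a b :: real
  assumes "0 \<le> b" and perturbed: "\<And>t. 0 < t \<Longrightarrow> t \<le> 1 \<Longrightarrow> 0 \<le> a + t * b"
  shows "0 \<le> a"
proof (rule ccontr)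
  assume "\<not> 0 \<le> a"
  define t where "t = min 1 (- a / (2 * (b + 1)))"
  have "0 < t" "t \<le> 1"
    using \<open>\<not> 0 \<le> a\<close> \<open>0 \<le> b\<close> by (auto simp: t_def divide_neg_pos)
  moreover have "t * (2 * (b + 1)) \<le> - a"
    using \<open>0 \<le> b\<close> by (simp add: t_def pos_le_divide_eq[symmetric])
  moreover have "t * b \<le> t * (b + 1)"
    using \<open>0 < t\<close> by simp
  ultimately have "a + t * b < 0"
    using \<open>\<not> 0 \<le> a\<close> by linarith
  with perturbed[OF \<open>0 < t\<close> \<open>t \<le> 1\<close>] show False by linarith
qed

lemma prox_model_min_imp_variational_ineq:
  fixes C :: "'a::real_inner set"
  assumes "L \<noteq> 0" "0 \<le> L + mu" "convex C" "z0 \<in> C" "z \<in> C"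
    and min: "\<And>v. v \<in> C \<Longrightarrow> prox_model L mu gy y z0 \<le> prox_model L mu gy y v"
  shows "0 \<le> inner ((L + mu) *\<^sub>R (z0 - y) + gy) (z - z0)"
proof -
  define ip where "ip = inner ((L + mu) *\<^sub>R (z0 - y) + gy) (z - z0)"
  define N where "N = (L + mu) / 2 * (norm (z - z0))\<^sup>2"
  have "0 \<le> N"
    using assms(2) by (simp add: N_def)
  moreover have "0 \<le> ip + t * N" if t: "0 < t" "t \<le> 1" for t
  proof -
    have "z0 + t *\<^sub>R (z - z0) = (1 - t) *\<^sub>R z0 + t *\<^sub>R z"
      by (simp add: algebra_simps)
    then have "z0 + t *\<^sub>R (z - z0) \<in> C"
      using convexD[OF assms(3,4,5), of "1 - t" t] t by simp
    from min[OF this] have "prox_model L mu gy y z0 \<le> prox_model L mu gy y z0 + t * ip + t\<^sup>2 * N"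
      using prox_model_expansion[OF assms(1), of mu gy y "z0 + t *\<^sub>R (z - z0)" z0]
      unfolding add_diff_cancel_left' inner_scaleR_right norm_scaleR power_mult_distrib
        ip_def[symmetric] N_def
      by (simp add: mult_ac)
    then have "0 \<le> t * (ip + t * N)"
      by (simp add: power2_eq_square algebra_simps)
    then show ?thesis
      using t by (simp add: zero_le_mult_iff)
  qed
  ultimately show ?thesis
    unfolding ip_def[symmetric] by (rule nonneg_if_perturbations_nonneg)
qed

lemma summable_of_contractive_bound:
  fixes a b :: "nat \<Rightarrow> real"
  assumes a0: "\<And>n. 0 \<le> a n" and b0: "\<And>n. 0 \<le> b n" and "summable b"
    and "0 \<le> \<omega>" "\<omega> < 1" and rec: "\<And>n. a (Suc n) \<le> \<omega> * a n + b n"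
  shows "summable a"
proof (rule summableI_nonneg_bounded)
  fix N
  have "(\<Sum>n<N. b n) \<le> suminf b"
    using \<open>summable b\<close> b0 by (intro sum_le_suminf) auto
  moreover have "(\<Sum>n<N. a (Suc n)) \<le> \<omega> * (\<Sum>n<N. a n) + (\<Sum>n<N. b n)"
    using sum_mono[of "{..<N}" "\<lambda>n. a (Suc n)" "\<lambda>n. \<omega> * a n + b n"] rec
    by (simp add: sum.distrib sum_distrib_left)
  moreover have "(\<Sum>n<Suc N. a n) = a 0 + (\<Sum>n<N. a (Suc n))"
    by (rule sum.lessThan_Suc_shift)
  moreover have "(\<Sum>n<N. a n) \<le> (\<Sum>n<Suc N. a n)"
    using a0 by simp
  moreover from this have "\<omega> * (\<Sum>n<N. a n) \<le> \<omega> * (\<Sum>n<Suc N. a n)"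
    using \<open>0 \<le> \<omega>\<close> by (rule mult_left_mono)
  ultimately have "(1 - \<omega>) * (\<Sum>n<Suc N. a n) \<le> a 0 + suminf b"
    by (simp add: algebra_simps)
  then have "(\<Sum>n<Suc N. a n) \<le> (a 0 + suminf b) / (1 - \<omega>)"
    using \<open>\<omega> < 1\<close> by (simp add: pos_le_divide_eq mult.commute)
  with \<open>(\<Sum>n<N. a n) \<le> (\<Sum>n<Suc N. a n)\<close> show "(\<Sum>n<N. a n) \<le> (a 0 + suminf b) / (1 - \<omega>)"
    by linarith
qed (rule a0)

lemma convergent_of_summable_increments:
  fixes D t :: "nat \<Rightarrow> real"
  assumes D0: "\<And>n. 0 \<le> D n" and t0: "\<And>n. 0 \<le> t n" and "summable t"
    and rec: "\<And>n. D (Suc n) \<le> D n + t n"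
  shows "convergent D"
proof -
  define G where "G n = D n - (\<Sum>j<n. t j)" for n
  have "decseq G"
    unfolding decseq_Suc_iff G_def using rec by (simp add: field_simps)
  moreover have "- suminf t \<le> G n" for n
    using sum_le_suminf[OF \<open>summable t\<close>, of "{..<n}"] t0 D0[of n] by (simp add: G_def)
  ultimately obtain c where "G \<longlonglongrightarrow> c"
    using decseq_convergent by blast
  from tendsto_add[OF this summable_LIMSEQ[OF \<open>summable t\<close>]]
  show ?thesis by (auto simp: G_def convergent_def)
qed

lemma power2_add_le_weighted:
  fixes P Q \<omega> :: real
  assumes "0 < \<omega>" "\<omega> < 1"
  shows "(P + Q)\<^sup>2 \<le> P\<^sup>2 / (1 - \<omega>) + Q\<^sup>2 / \<omega>"
proof -
  have "P\<^sup>2 * \<omega> + Q\<^sup>2 * (1 - \<omega>) - (P + Q)\<^sup>2 * (\<omega> * (1 - \<omega>)) = (P * \<omega> - Q * (1 - \<omega>))\<^sup>2"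
    by (simp add: power2_eq_square algebra_simps)
  then have "(P + Q)\<^sup>2 * (\<omega> * (1 - \<omega>)) \<le> P\<^sup>2 * \<omega> + Q\<^sup>2 * (1 - \<omega>)"
    using zero_le_power2[of "P * \<omega> - Q * (1 - \<omega>)"] by linarith
  moreover have "P\<^sup>2 / (1 - \<omega>) + Q\<^sup>2 / \<omega> = (P\<^sup>2 * \<omega> + Q\<^sup>2 * (1 - \<omega>)) / (\<omega> * (1 - \<omega>))"
    using assms by (simp add: field_simps)
  ultimately show ?thesis
    using assms by (simp add: le_divide_eq)
qed

locale alg1_run =
  fixes lam L mu om :: real and l u :: "real^'n" and f :: "real^'n \<Rightarrow> real"
    and g :: "real^'n \<Rightarrow> real^'n" and w :: "nat \<Rightarrow> real" and x :: "nat \<Rightarrow> real^'n"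
  assumes lam: "lam > 0"
    and cvx: "convex_on UNIV f"
    and grad: "\<forall>z. (f has_derivative (\<lambda>h. inner (g z) h)) (at z)"
    and bdd: "\<exists>c. \<forall>z \<in> box_set l u. c \<le> f z"
    and L: "L > 0"
    and lip: "\<forall>z1 \<in> box_set l u. \<forall>z2 \<in> box_set l u. norm (g z1 - g z2) \<le> L * norm (z1 - z2)"
    and mu: "mu > 0"
    and om: "om < 1"
    and w: "\<forall>k. 0 \<le> w k \<and> w k \<le> om"
    and alg: "alg1_seq lam g l u L mu w x"
begin

abbreviation X where "X \<equiv> box_set l u"

definition y_seq :: "nat \<Rightarrow> real^'n" where
  "y_seq k = y_it g X w x k"

definition F :: "real^'n \<Rightarrow> real" where
  "F z = lam * real (l0norm z) + f z"

lemma Hfun_eq_F: "z \<in> X \<Longrightarrow> Hfun lam f l u z = ereal (F z)"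
  by (simp add: Hfun_def ind_fun_def F_def)

lemma x_in_box: "x k \<in> X"
  using alg unfolding alg1_seq_def by (cases k) auto

lemma x_Suc_minimizes:
  "z \<in> X \<Longrightarrow> lam * real (l0norm (x (Suc k))) + prox_model L mu (g (y_seq k)) (y_seq k) (x (Suc k))
    \<le> lam * real (l0norm z) + prox_model L mu (g (y_seq k)) (y_seq k) z"
  using alg unfolding alg1_seq_def y_seq_def sub_obj_eq_prox_model by blast

lemma lipschitz_on_grad: "L-lipschitz_on X g"
  using lip L by (auto simp: lipschitz_on_def dist_norm)

lemma continuous_on_grad: "continuous_on X g"
  by (rule lipschitz_on_continuous_on[OF lipschitz_on_grad])

lemma descent_on_box: "a \<in> X \<Longrightarrow> b \<in> X \<Longrightarrow> f b \<le> f a + inner (g a) (b - a) + L / 2 * (norm (b - a))\<^sup>2"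
  by (rule descent_lemma[OF grad convex_box_set lipschitz_on_grad])

lemma y_seq_cases:
  "y_seq k = x k \<or> (y_seq k = extrap w x k \<and> inner (y_seq k - x k) (g (y_seq k)) \<le> 0 \<and> y_seq k \<in> X)"
  unfolding y_seq_def y_it_def Let_def by auto

lemma y_seq_in_box: "y_seq k \<in> X"
  using y_seq_cases[of k] x_in_box[of k] by auto

lemma y_seq_supp: "supp_vec (y_seq k) \<subseteq> supp_vec (x k)"
  using y_seq_cases[of k] by (auto simp: extrap_def supp_vec_def)

lemma l0norm_y_seq_le: "l0norm (y_seq k) \<le> l0norm (x k)"
  unfolding l0norm_eq_card_supp_vec by (rule card_mono[OF _ y_seq_supp]) simp

text \<open>By convexity, the reset test \<open>\<langle>y - x, \<nabla>f y\<rangle> \<le> 0\<close> guarantees \<open>f y \<le> f x\<close>.\<close>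
lemma f_y_seq_le: "f (y_seq k) \<le> f (x k)"
proof (cases "y_seq k = x k")
  case False
  then have "inner (y_seq k - x k) (g (y_seq k)) \<le> 0"
    using y_seq_cases[of k] by auto
  moreover have "f (y_seq k) + inner (g (y_seq k)) (x k - y_seq k) \<le> f (x k)"
    by (rule convex_on_gradient_inequality[OF cvx grad])
  moreover have "inner (g (y_seq k)) (x k - y_seq k) = - inner (y_seq k - x k) (g (y_seq k))"
    by (simp add: inner_commute inner_diff_right inner_diff_left)
  ultimately show ?thesis by linarith
qed simp

lemma sufficient_decrease: "F (x (Suc k)) + mu / 2 * (norm (x (Suc k) - y_seq k))\<^sup>2 \<le> F (x k)"
proof -
  let ?y = "y_seq k" and ?x = "x (Suc k)"
  have "lam * real (l0norm ?x) + prox_model L mu (g ?y) ?y ?x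
      \<le> lam * real (l0norm ?y) + prox_model L mu (g ?y) ?y ?y"
    by (rule x_Suc_minimizes[OF y_seq_in_box])
  moreover have "prox_model L mu (g ?y) ?y ?x = prox_model L mu (g ?y) ?y ?y
      + inner (g ?y) (?x - ?y) + (L + mu) / 2 * (norm (?x - ?y))\<^sup>2"
    using prox_model_expansion[of L mu "g ?y" ?y ?x ?y] L by simp
  moreover have "f ?x \<le> f ?y + inner (g ?y) (?x - ?y) + L / 2 * (norm (?x - ?y))\<^sup>2"
    by (rule descent_on_box[OF y_seq_in_box x_in_box])
  moreover have "lam * real (l0norm ?y) \<le> lam * real (l0norm (x k))"
    using l0norm_y_seq_le[of k] lam by simp
  ultimately show ?thesis
    using f_y_seq_le[of k] unfolding F_def by (simp add: field_simps)
qed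

lemma F_Suc_le: "F (x (Suc k)) \<le> F (x k)"
proof -
  have "0 \<le> mu / 2 * (norm (x (Suc k) - y_seq k))\<^sup>2"
    using mu by simp
  with sufficient_decrease[of k] show ?thesis by linarith
qed

lemma F_antimono: "m \<le> n \<Longrightarrow> F (x n) \<le> F (x m)"
  by (induction n rule: dec_induct) (use F_Suc_le order_trans in blast)+

lemma summable_residual: "summable (\<lambda>k. (norm (x (Suc k) - y_seq k))\<^sup>2)"
proof -
  obtain c where c: "\<forall>z\<in>X. c \<le> f z"
    using bdd by blast
  have "c \<le> F (x n)" for n
  proof -
    have "0 \<le> lam * real (l0norm (x n))"
      using lam by simp
    with c x_in_box[of n] show ?thesis
      unfolding F_def by fastforce
  qed
  moreover have "(\<Sum>k<n. mu / 2 * (norm (x (Suc k) - y_seq k))\<^sup>2) \<le> F (x 0) - F (x n)" for n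
  proof (induction n)
    case (Suc n)
    then show ?case using sufficient_decrease[of n] by simp
  qed simp
  ultimately have "mu / 2 * (\<Sum>k<n. (norm (x (Suc k) - y_seq k))\<^sup>2) \<le> F (x 0) - c" for n
    unfolding sum_distrib_left by (meson diff_left_mono order_trans)
  with mu have "(\<Sum>k<n. (norm (x (Suc k) - y_seq k))\<^sup>2) \<le> 2 / mu * (F (x 0) - c)" for n
    by (simp add: field_simps)
  then show ?thesis
    by (intro summableI_nonneg_bounded[where x = "2 / mu * (F (x 0) - c)"]) auto
qed

lemma residual_tendsto_zero: "(\<lambda>k. x (Suc k) - y_seq k) \<longlonglongrightarrow> 0"
proof -
  have "(\<lambda>k. sqrt ((norm (x (Suc k) - y_seq k))\<^sup>2)) \<longlonglongrightarrow> sqrt 0"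
    using summable_LIMSEQ_zero[OF summable_residual] by (rule tendsto_real_sqrt)
  then show ?thesis
    using tendsto_norm_zero_iff by force
qed


text \<open>Zeroing a free coordinate of \<open>x\<^sup>k\<^sup>+\<^sup>1\<close> saves \<open>lam\<close> in the \<open>\<ell>\<^sub>0\<close> term, which must be paid
  for in the quadratic model; this forces nonzero entries to be bounded away from zero.\<close>
lemma l0_penalty_le_zeroing_cost:
  assumes "l $ i \<le> 0" "0 \<le> u $ i" and nz: "x (Suc k) $ i \<noteq> 0"
  shows "lam \<le> \<bar>x (Suc k) $ i\<bar> * ((L + mu) * \<bar>y_seq k $ i\<bar> + \<bar>g (y_seq k) $ i\<bar>)"
proof -
  let ?x = "x (Suc k)" and ?y = "y_seq k" and ?c = "L + mu"
  define a where "a = ?x $ i"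
  define z where "z = ?x - a *\<^sub>R axis i 1"
  have z_comp: "z $ j = (if j = i then 0 else ?x $ j)" for j
    by (simp add: z_def a_def axis_def)
  have "z \<in> X"
    using x_in_box[of "Suc k"] assms(1,2) by (auto simp: box_set_def z_comp)
  have "supp_vec ?x = insert i (supp_vec z)" "i \<notin> supp_vec z"
    using nz by (auto simp: supp_vec_def z_comp split: if_splits)
  then have "real (l0norm ?x) = real (l0norm z) + 1"
    by (simp add: l0norm_eq_card_supp_vec)
  moreover have "lam * real (l0norm ?x) + prox_model L mu (g ?y) ?y ?x
      \<le> lam * real (l0norm z) + prox_model L mu (g ?y) ?y z"
    by (rule x_Suc_minimizes[OF \<open>z \<in> X\<close>])
  moreover have "z - ?x = (- a) *\<^sub>R axis i 1"
    by (simp add: z_def)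
  then have "prox_model L mu (g ?y) ?y z
      = prox_model L mu (g ?y) ?y ?x - a * (?c * (a - ?y $ i) + g ?y $ i) + ?c / 2 * a\<^sup>2"
    using prox_model_expansion[of L mu "g ?y" ?y z ?x] L by (simp add: inner_axis a_def)
  ultimately have "lam \<le> - a * (?c * (a - ?y $ i) + g ?y $ i) + ?c / 2 * a\<^sup>2"
    by (simp add: distrib_left)
  also have "\<dots> = - ?c / 2 * a\<^sup>2 + a * (?c * ?y $ i - g ?y $ i)"
    by (simp add: field_simps power2_eq_square)
  also have "\<dots> \<le> \<bar>a\<bar> * \<bar>?c * ?y $ i - g ?y $ i\<bar>"
  proof -
    have "a * (?c * ?y $ i - g ?y $ i) \<le> \<bar>a\<bar> * \<bar>?c * ?y $ i - g ?y $ i\<bar>"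
      by (simp add: abs_mult[symmetric])
    moreover have "0 \<le> ?c / 2 * a\<^sup>2"
      using L mu by simp
    ultimately show ?thesis by linarith
  qed
  also have "\<dots> \<le> \<bar>a\<bar> * (?c * \<bar>?y $ i\<bar> + \<bar>g ?y $ i\<bar>)"
  proof (rule mult_left_mono)
    have "\<bar>?c * ?y $ i\<bar> = ?c * \<bar>?y $ i\<bar>"
      using L mu by (simp add: abs_mult)
    then show "\<bar>?c * ?y $ i - g ?y $ i\<bar> \<le> ?c * \<bar>?y $ i\<bar> + \<bar>g ?y $ i\<bar>"
      using abs_triangle_ineq4[of "?c * ?y $ i" "g ?y $ i"] by simp
  qed simp
  finally show ?thesis
    unfolding a_def .
qed

lemma nonzero_component_lower_bound:
  obtains \<delta> where "\<delta> > 0"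
    and "\<And>k i. l $ i \<le> 0 \<Longrightarrow> 0 \<le> u $ i \<Longrightarrow> x (Suc k) $ i \<noteq> 0 \<Longrightarrow> \<delta> \<le> \<bar>x (Suc k) $ i\<bar>"
proof -
  obtain B where "B > 0" and B: "\<And>z. z \<in> X \<Longrightarrow> norm z \<le> B"
    using compact_imp_bounded[OF compact_box_set[of l u]] unfolding bounded_pos by blast
  obtain G where "G > 0" and G: "\<And>z. z \<in> X \<Longrightarrow> norm (g z) \<le> G"
    using compact_imp_bounded[OF compact_continuous_image[OF continuous_on_grad compact_box_set[of l u]]]
    unfolding bounded_pos by blast
  define \<delta> where "\<delta> = lam / ((L + mu) * B + G)"
  have pos: "0 < (L + mu) * B + G"
    using L mu \<open>B > 0\<close> \<open>G > 0\<close> by (simp add: add_pos_pos)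
  have "\<delta> \<le> \<bar>x (Suc k) $ i\<bar>" if "l $ i \<le> 0" "0 \<le> u $ i" "x (Suc k) $ i \<noteq> 0" for k i
  proof -
    have "\<bar>y_seq k $ i\<bar> \<le> B" "\<bar>g (y_seq k) $ i\<bar> \<le> G"
      using B[OF y_seq_in_box] G[OF y_seq_in_box] component_le_norm_cart order_trans by blast+
    then have "(L + mu) * \<bar>y_seq k $ i\<bar> + \<bar>g (y_seq k) $ i\<bar> \<le> (L + mu) * B + G"
      using L mu by (intro add_mono mult_left_mono) auto
    with l0_penalty_le_zeroing_cost[OF that] have "lam \<le> \<bar>x (Suc k) $ i\<bar> * ((L + mu) * B + G)"
      by (meson abs_ge_zero mult_left_mono order_trans)
    with pos show ?thesis
      by (simp add: \<delta>_def divide_le_eq)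
  qed
  moreover have "\<delta> > 0"
    using lam pos by (simp add: \<delta>_def)
  ultimately show ?thesis
    using that by blast
qed

lemma eventually_supp_vec_Suc_subset:
  obtains K0 where "\<And>k. K0 \<le> k \<Longrightarrow> supp_vec (x (Suc k)) \<subseteq> supp_vec (x k)"
proof -
  obtain \<delta> where "\<delta> > 0"
    and \<delta>: "\<And>k i. l $ i \<le> 0 \<Longrightarrow> 0 \<le> u $ i \<Longrightarrow> x (Suc k) $ i \<noteq> 0 \<Longrightarrow> \<delta> \<le> \<bar>x (Suc k) $ i\<bar>"
    using nonzero_component_lower_bound by blast
  obtain K0 where K0: "\<And>k. K0 \<le> k \<Longrightarrow> norm (x (Suc k) - y_seq k) < \<delta>"
    using LIMSEQ_D[OF residual_tendsto_zero \<open>\<delta> > 0\<close>] by auto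
  have "i \<in> supp_vec (x k)" if "K0 \<le> k" "i \<in> supp_vec (x (Suc k))" for k i
  proof (rule ccontr)
    assume "i \<notin> supp_vec (x k)"
    then have "x k $ i = 0" "y_seq k $ i = 0"
      using y_seq_supp[of k] by (auto simp: supp_vec_def)
    moreover have "l $ i \<le> x k $ i" "x k $ i \<le> u $ i"
      using x_in_box[of k] by (auto simp: box_set_def)
    ultimately have "l $ i \<le> 0" "0 \<le> u $ i"
      by simp_all
    moreover have "\<bar>x (Suc k) $ i\<bar> < \<delta>"
      using component_le_norm_cart[of "x (Suc k) - y_seq k" i] K0[OF \<open>K0 \<le> k\<close>] \<open>y_seq k $ i = 0\<close>
      by simp
    ultimately show False
      using \<delta>[of i k] that(2) by (auto simp: supp_vec_def)
  qed
  then show ?thesis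
    using that by blast
qed

text \<open>Once the supports are nested, the cardinalities form a nonincreasing sequence of naturals.\<close>
lemma eventually_supp_vec_constant:
  obtains K where "\<And>m. K \<le> m \<Longrightarrow> supp_vec (x m) = supp_vec (x K)"
proof -
  obtain K0 where K0: "\<And>k. K0 \<le> k \<Longrightarrow> supp_vec (x (Suc k)) \<subseteq> supp_vec (x k)"
    using eventually_supp_vec_Suc_subset by blast
  have nested: "supp_vec (x n) \<subseteq> supp_vec (x m)" if "K0 \<le> m" "m \<le> n" for m n
    using that(2,1)
  proof (induction n rule: dec_induct)
    case (step n)
    then show ?case using K0[of n] by auto
  qed simp
  define v where "v = (LEAST v. \<exists>m\<ge>K0. card (supp_vec (x m)) = v)"
  obtain K where K: "K0 \<le> K" "card (supp_vec (x K)) = v"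
    using LeastI_ex[of "\<lambda>v. \<exists>m\<ge>K0. card (supp_vec (x m)) = v"] unfolding v_def by blast
  have "supp_vec (x m) = supp_vec (x K)" if "K \<le> m" for m
  proof (rule card_subset_eq)
    show "supp_vec (x m) \<subseteq> supp_vec (x K)"
      using nested K that by auto
    then have "card (supp_vec (x m)) \<le> card (supp_vec (x K))"
      by (intro card_mono) auto
    moreover have "v \<le> card (supp_vec (x m))"
      unfolding v_def using K that by (intro Least_le) (auto intro: order_trans)
    ultimately show "card (supp_vec (x m)) = card (supp_vec (x K))"
      using K by simp
  qed simp
  then show ?thesis
    using that by blast
qed

end

locale alg1_stable_support = alg1_run +
  fixes K :: nat
  assumes supp_stable: "\<And>m. K \<le> m \<Longrightarrow> supp_vec (x m) = supp_vec (x K)"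
begin

abbreviation S where "S \<equiv> supp_vec (x K)"

definition C where
  "C = X \<inter> {v. supp_vec v \<subseteq> S}"

lemma convex_C: "convex C"
  unfolding C_def by (intro convex_Int convex_box_set convex_supp_vec_subset)

lemma x_in_C: "K \<le> m \<Longrightarrow> x m \<in> C"
  using supp_stable[of m] x_in_box[of m] by (simp add: C_def)

lemma F_eq_on_tail: "K \<le> m \<Longrightarrow> F (x m) = lam * real (card S) + f (x m)"
  using supp_stable[of m] by (simp add: F_def l0norm_eq_card_supp_vec)

lemma f_antimono_on_tail: "K \<le> m \<Longrightarrow> m \<le> n \<Longrightarrow> f (x n) \<le> f (x m)"
  using F_antimono[of m n] F_eq_on_tail[of m] F_eq_on_tail[of n] by simp

text \<open>On the tail no point of \<open>C\<close> has more nonzeros than \<open>x\<^sup>k\<^sup>+\<^sup>1\<close>, so \<open>x\<^sup>k\<^sup>+\<^sup>1\<close> minimizes the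
  quadratic model over the convex set \<open>C\<close>.\<close>
lemma variational_ineq:
  assumes "K \<le> k" "z \<in> C"
  shows "0 \<le> inner ((L + mu) *\<^sub>R (x (Suc k) - y_seq k) + g (y_seq k)) (z - x (Suc k))"
proof (rule prox_model_min_imp_variational_ineq[OF _ _ convex_C x_in_C \<open>z \<in> C\<close>])
  fix v assume "v \<in> C"
  then have "lam * real (l0norm v) \<le> lam * real (l0norm (x (Suc k)))"
    using supp_stable[of "Suc k"] assms(1) lam
    by (simp add: C_def l0norm_eq_card_supp_vec card_mono)
  with x_Suc_minimizes[of v k] \<open>v \<in> C\<close>
  show "prox_model L mu (g (y_seq k)) (y_seq k) (x (Suc k)) \<le> prox_model L mu (g (y_seq k)) (y_seq k) v"
    by (simp add: C_def)
qed (use L mu assms(1) in auto)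

end

locale alg1_cluster = alg1_stable_support +
  fixes p and r :: "nat \<Rightarrow> nat"
  assumes r: "strict_mono r" and x_r: "(x \<circ> r) \<longlonglongrightarrow> p"
begin

lemma x_r_tendsto: "(\<lambda>j. x (r j)) \<longlonglongrightarrow> p"
  using x_r by (simp add: o_def)

lemma p_in_box: "p \<in> X"
  using closed_sequentially[OF compact_imp_closed[OF compact_box_set[of l u]], of "\<lambda>j. x (r j)"]
    x_in_box x_r_tendsto by blast

lemma supp_vec_p: "supp_vec p = S"
proof (intro set_eqI iffI)
  fix i assume "i \<in> S"
  then have nz: "x (r j) $ i \<noteq> 0" if "K \<le> j" for j
    using supp_stable[of "r j"] seq_suble[OF r, of j] that by (auto simp: supp_vec_def)
  show "i \<in> supp_vec p"
  proof (cases "l $ i \<le> 0 \<and> 0 \<le> u $ i")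
    case True
    obtain \<delta> where "\<delta> > 0"
      and \<delta>: "\<And>k i. l $ i \<le> 0 \<Longrightarrow> 0 \<le> u $ i \<Longrightarrow> x (Suc k) $ i \<noteq> 0 \<Longrightarrow> \<delta> \<le> \<bar>x (Suc k) $ i\<bar>"
      using nonzero_component_lower_bound by blast
    have "\<delta> \<le> \<bar>x (r j) $ i\<bar>" if "Suc K \<le> j" for j
    proof -
      have "r j = Suc (r j - 1)"
        using seq_suble[OF r, of j] that by simp
      then show ?thesis
        using \<delta>[of i "r j - 1"] True nz[of j] that by simp
    qed
    moreover have "(\<lambda>j. \<bar>x (r j) $ i\<bar>) \<longlonglongrightarrow> \<bar>p $ i\<bar>"
      using x_r_tendsto by (intro tendsto_intros)
    ultimately have "\<delta> \<le> \<bar>p $ i\<bar>"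
      using LIMSEQ_le_const by blast
    with \<open>\<delta> > 0\<close> show ?thesis
      by (auto simp: supp_vec_def)
  next
    case False
    moreover have "l $ i \<le> p $ i" "p $ i \<le> u $ i"
      using p_in_box by (auto simp: box_set_def)
    ultimately show ?thesis
      by (auto simp: supp_vec_def)
  qed
next
  fix i assume "i \<in> supp_vec p"
  show "i \<in> S"
  proof (rule ccontr)
    assume "i \<notin> S"
    then have "x (r j) $ i = 0" if "K \<le> j" for j
      using supp_stable[of "r j"] seq_suble[OF r, of j] that by (auto simp: supp_vec_def)
    then have "eventually (\<lambda>j. x (r j) $ i = 0) sequentially"
      by (auto simp: eventually_sequentially)
    moreover have "(\<lambda>j. x (r j) $ i) \<longlonglongrightarrow> p $ i"
      using x_r_tendsto by (intro tendsto_intros)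
    ultimately have "p $ i = 0"
      using LIMSEQ_unique[OF _ tendsto_eventually] by blast
    with \<open>i \<in> supp_vec p\<close> show False
      by (simp add: supp_vec_def)
  qed
qed

lemma p_in_C: "p \<in> C"
  using p_in_box supp_vec_p by (simp add: C_def)

lemma y_r_tendsto: "(\<lambda>j. y_seq (r j - 1)) \<longlonglongrightarrow> p"
proof -
  have "(\<lambda>m. x m - y_seq (m - 1)) \<longlonglongrightarrow> 0"
    by (rule LIMSEQ_imp_Suc) (use residual_tendsto_zero in simp)
  from LIMSEQ_subseq_LIMSEQ[OF this r]
  have "(\<lambda>j. x (r j) - y_seq (r j - 1)) \<longlonglongrightarrow> 0"
    by (simp add: o_def)
  from tendsto_diff[OF x_r_tendsto this] show ?thesis
    by simp
qed

lemma grad_p_variational_ineq: "z \<in> C \<Longrightarrow> 0 \<le> inner (g p) (z - p)"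
proof -
  assume "z \<in> C"
  have "(\<lambda>j. g (y_seq (r j - 1))) \<longlonglongrightarrow> g p"
    by (rule continuous_on_tendsto_compose[OF continuous_on_grad y_r_tendsto p_in_box])
      (simp add: y_seq_in_box)
  then have lim: "(\<lambda>j. inner ((L + mu) *\<^sub>R (x (r j) - y_seq (r j - 1)) + g (y_seq (r j - 1))) (z - x (r j)))
      \<longlonglongrightarrow> inner ((L + mu) *\<^sub>R (p - p) + g p) (z - p)"
    by (intro tendsto_intros x_r_tendsto y_r_tendsto)
  have "0 \<le> inner ((L + mu) *\<^sub>R (x (r j) - y_seq (r j - 1)) + g (y_seq (r j - 1))) (z - x (r j))"
    if "Suc K \<le> j" for j
  proof -
    have "j \<le> r j"
      using seq_suble[OF r] by blast
    with that have "r j = Suc (r j - 1)" "K \<le> r j - 1"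
      by auto
    then obtain k where "r j = Suc k" "K \<le> k"
      by blast
    then show ?thesis
      using variational_ineq[OF \<open>K \<le> k\<close> \<open>z \<in> C\<close>] by simp
  qed
  then have "0 \<le> inner ((L + mu) *\<^sub>R (p - p) + g p) (z - p)"
    using LIMSEQ_le_const[OF lim] by blast
  then show ?thesis
    by simp
qed

lemma f_p_le_on_C: "z \<in> C \<Longrightarrow> f p \<le> f z"
  using convex_on_gradient_inequality[OF cvx grad, of p z] grad_p_variational_ineq[of z] by linarith

lemma f_x_r_tendsto: "(\<lambda>j. f (x (r j))) \<longlonglongrightarrow> f p"
  using grad has_derivative_continuous isCont_tendsto_compose x_r_tendsto by blast

lemma f_x_tendsto: "(\<lambda>m. f (x m)) \<longlonglongrightarrow> f p"
proof (rule LIMSEQ_I)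
  fix e :: real assume "0 < e"
  then obtain j0 where j0: "\<And>j. j0 \<le> j \<Longrightarrow> norm (f (x (r j)) - f p) < e"
    using LIMSEQ_D[OF f_x_r_tendsto] by blast
  define M where "M = r (max j0 K)"
  have "K \<le> M"
    unfolding M_def using seq_suble[OF r, of "max j0 K"] by simp
  have "norm (f (x m) - f p) < e" if "M \<le> m" for m
    using f_antimono_on_tail[OF \<open>K \<le> M\<close> that] j0[of "max j0 K"] f_p_le_on_C[OF x_in_C, of m]
      \<open>K \<le> M\<close> that
    unfolding M_def by simp
  then show "\<exists>no. \<forall>n\<ge>no. norm (f (x n) - f p) < e"
    by blast
qed

lemma Hfun_x_tendsto: "(\<lambda>m. Hfun lam f l u (x m)) \<longlonglongrightarrow> Hfun lam f l u p"
proof -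
  have "(\<lambda>m. lam * real (card S) + f (x m)) \<longlonglongrightarrow> lam * real (card S) + f p"
    by (intro tendsto_intros f_x_tendsto)
  moreover have "eventually (\<lambda>m. lam * real (card S) + f (x m) = F (x m)) sequentially"
    unfolding eventually_sequentially using F_eq_on_tail by metis
  ultimately have "(\<lambda>m. F (x m)) \<longlonglongrightarrow> F p"
    unfolding F_def l0norm_eq_card_supp_vec supp_vec_p by (rule Lim_transform_eventually)
  then show ?thesis
    by (simp add: Hfun_eq_F x_in_box p_in_box)
qed

text \<open>Near \<open>p\<close> no coordinate of \<open>S\<close> vanishes; a point of \<open>X\<close> there either lies in \<open>C\<close>, where \<open>p\<close>
  minimizes \<open>f\<close>, or has a strictly larger support, whose \<open>\<ell>\<^sub>0\<close> penalty outweighs any decrease of \<open>f\<close>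
  by less than \<open>lam\<close>.\<close>
lemma F_p_le_near:
  obtains e where "e > 0" "\<And>z. z \<in> X \<Longrightarrow> dist z p < e \<Longrightarrow> F p \<le> F z"
proof -
  define U where "U = (\<Inter>i\<in>S. {z. z $ i \<noteq> 0}) \<inter> {z. f p - lam < f z}"
  have "continuous_on UNIV f"
    using grad has_derivative_continuous continuous_at_imp_continuous_on by blast
  moreover have "open {z::real^'n. z $ i \<noteq> 0}" for i
    by (intro open_Collect_neq continuous_intros)
  ultimately have "open U"
    unfolding U_def by (intro open_Int open_INT open_Collect_less continuous_intros) auto
  moreover have "p \<in> U"
    using supp_vec_p lam by (auto simp: U_def supp_vec_def)
  ultimately obtain e where "e > 0" "ball p e \<subseteq> U"
    using open_contains_ball by blast
  have "F p \<le> F z" if "z \<in> X" "dist z p < e" for z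
  proof -
    have "z \<in> U"
      using \<open>ball p e \<subseteq> U\<close> that by (auto simp: dist_commute)
    then have "S \<subseteq> supp_vec z" "f p - lam < f z"
      by (auto simp: U_def supp_vec_def)
    show ?thesis
    proof (cases "supp_vec z = S")
      case True
      with \<open>z \<in> X\<close> have "z \<in> C"
        by (simp add: C_def)
      with True show ?thesis
        using f_p_le_on_C by (simp add: F_def l0norm_eq_card_supp_vec supp_vec_p)
    next
      case False
      with \<open>S \<subseteq> supp_vec z\<close> have "card S < card (supp_vec z)"
        by (intro psubset_card_mono) auto
      then have "lam * (real (card S) + 1) \<le> lam * real (card (supp_vec z))"
        using lam by (intro mult_left_mono) auto
      with \<open>f p - lam < f z\<close> show ?thesis
        by (simp add: F_def l0norm_eq_card_supp_vec supp_vec_p distrib_left)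
    qed
  qed
  with \<open>e > 0\<close> show ?thesis
    using that by blast
qed

lemma local_minimizer_p: "local_minimizer (Hfun lam f l u) X p"
proof -
  obtain e where "e > 0" and e: "\<And>z. z \<in> X \<Longrightarrow> dist z p < e \<Longrightarrow> F p \<le> F z"
    using F_p_le_near by blast
  have "Hfun lam f l u p \<le> Hfun lam f l u z" if "dist z p < e" for z
  proof (cases "z \<in> X")
    case True
    with e[OF True that] show ?thesis
      by (simp add: Hfun_eq_F p_in_box)
  qed (simp add: Hfun_def ind_fun_def)
  with \<open>e > 0\<close> p_in_box show ?thesis
    unfolding local_minimizer_def by blast
qed

end

locale alg1_inertial = alg1_cluster +
  assumes om_pos: "0 < om"
begin

definition step_sq :: "nat \<Rightarrow> real" where
  "step_sq k = (norm (x (Suc k) - x k))\<^sup>2"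

definition residual_sq :: "nat \<Rightarrow> real" where
  "residual_sq k = (norm (x (Suc k) - y_seq k))\<^sup>2"

definition dist_sq :: "nat \<Rightarrow> real" where
  "dist_sq k = (norm (x k - p))\<^sup>2"

definition dist_sq_increase :: "nat \<Rightarrow> real" where
  "dist_sq_increase k = max 0 (dist_sq k - dist_sq (k - 1))"

text \<open>On the tail \<open>x\<^sup>k\<^sup>-\<^sup>1\<close> and \<open>x\<^sup>k\<close> have the same support, so extrapolating only on the support
  of \<open>x\<^sup>k\<close> is ordinary inertial extrapolation.\<close>
lemma y_seq_on_tail:
  assumes "Suc K \<le> k"
  shows "y_seq k = x k \<or> y_seq k = x k + w k *\<^sub>R (x k - x (k - 1))"
proof (cases "y_seq k = x k")
  case False
  then have y: "y_seq k = extrap w x k"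
    using y_seq_cases[of k] by auto
  have "supp_vec (x (k - 1)) = supp_vec (x k)"
    using supp_stable[of k] supp_stable[of "k - 1"] assms by simp
  then have "x (k - 1) $ i = 0" if "x k $ i = 0" for i
    using that unfolding supp_vec_def by blast
  then have "y_seq k $ i = (x k + w k *\<^sub>R (x k - x (k - 1))) $ i" for i
    using assms by (cases "x k $ i = 0") (simp_all add: y extrap_def prev_it_def)
  then have "y_seq k = x k + w k *\<^sub>R (x k - x (k - 1))"
    by (simp add: vec_eq_iff)
  then show ?thesis ..
qed simp

lemma norm_y_seq_diff_le:
  assumes "Suc K \<le> k"
  shows "norm (y_seq k - x k) \<le> om * norm (x k - x (k - 1))"
proof -
  have "0 \<le> w k" "w k \<le> om"
    using w by auto
  then have "w k * norm (x k - x (k - 1)) \<le> om * norm (x k - x (k - 1))"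
    by (intro mult_right_mono) auto
  with y_seq_on_tail[OF assms] \<open>0 \<le> w k\<close> om_pos show ?thesis
    by auto
qed

lemma step_sq_le:
  assumes "Suc K \<le> k"
  shows "step_sq k \<le> residual_sq k / (1 - om) + om * step_sq (k - 1)"
proof -
  have "norm (x (Suc k) - x k) \<le> norm (x (Suc k) - y_seq k) + norm (y_seq k - x k)"
    using norm_triangle_ineq[of "x (Suc k) - y_seq k" "y_seq k - x k"] by simp
  also have "\<dots> \<le> norm (x (Suc k) - y_seq k) + om * norm (x k - x (k - 1))"
    using norm_y_seq_diff_le[OF assms] by simp
  finally have "step_sq k \<le> (norm (x (Suc k) - y_seq k) + om * norm (x k - x (k - 1)))\<^sup>2"
    unfolding step_sq_def by (intro power_mono) auto
  also have "\<dots> \<le> (norm (x (Suc k) - y_seq k))\<^sup>2 / (1 - om) + (om * norm (x k - x (k - 1)))\<^sup>2 / om"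
    by (rule power2_add_le_weighted[OF om_pos om])
  also have "(om * norm (x k - x (k - 1)))\<^sup>2 / om = om * step_sq (k - 1)"
    using assms om_pos by (simp add: step_sq_def power2_eq_square)
  finally show ?thesis
    unfolding residual_sq_def .
qed

text \<open>A Fej\'er-type inequality: the new iterate is closer to the cluster point \<open>p\<close> than the
  extrapolated point, because \<open>p \<in> C\<close> and \<open>f p \<le> f (x\<^sup>k\<^sup>+\<^sup>1)\<close>.\<close>
lemma dist_sq_Suc_le:
  assumes "K \<le> k"
  shows "dist_sq (Suc k) \<le> (norm (y_seq k - p))\<^sup>2"
proof -
  let ?x = "x (Suc k)" and ?y = "y_seq k" and ?c = "L + mu"
  let ?I = "inner (?x - ?y) (p - ?x)" and ?N = "(norm (?x - ?y))\<^sup>2"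
  have "0 \<le> inner (?c *\<^sub>R (?x - ?y) + g ?y) (p - ?x)"
    by (rule variational_ineq[OF assms p_in_C])
  moreover have "inner (?c *\<^sub>R (?x - ?y) + g ?y) (p - ?x) = ?c * ?I + inner (g ?y) (p - ?x)"
    by (simp add: inner_add_left)
  moreover have "f ?y + inner (g ?y) (p - ?y) \<le> f p"
    by (rule convex_on_gradient_inequality[OF cvx grad])
  moreover have "f ?x \<le> f ?y + inner (g ?y) (?x - ?y) + L / 2 * ?N"
    by (rule descent_on_box[OF y_seq_in_box x_in_box])
  moreover have "f p \<le> f ?x"
    using f_p_le_on_C[OF x_in_C] assms by simp
  moreover have "inner (g ?y) (?x - ?y) - inner (g ?y) (p - ?y) = - inner (g ?y) (p - ?x)"
    by (simp add: inner_diff_right)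
  ultimately have "0 \<le> ?c * ?I + L / 2 * ?N"
    by linarith
  moreover have "?c * (2 * ?I + ?N) = 2 * (?c * ?I + L / 2 * ?N) + mu * ?N"
    by (simp add: algebra_simps)
  ultimately have "0 \<le> ?c * (2 * ?I + ?N)"
    using mu by simp
  then have "0 \<le> 2 * ?I + ?N"
    using L mu by (simp add: zero_le_mult_iff)
  moreover have "(norm (?y - p))\<^sup>2 = dist_sq (Suc k) + 2 * ?I + ?N"
    using power2_norm_add[of "?x - p" "- (?x - ?y)"]
    by (simp add: dist_sq_def inner_commute inner_diff_left inner_diff_right norm_minus_commute)
  ultimately show ?thesis
    by linarith
qed

lemma norm_y_seq_minus_p_le:
  assumes "Suc K \<le> k"
  shows "(norm (y_seq k - p))\<^sup>2 \<le> dist_sq k + om * dist_sq_increase k + 2 * step_sq (k - 1)"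
proof (cases "y_seq k = x k")
  case True
  then show ?thesis
    using om_pos by (simp add: dist_sq_def step_sq_def dist_sq_increase_def)
next
  case False
  have w: "0 \<le> w k" "w k \<le> om"
    using w by auto
  have "Suc (k - 1) = k"
    using assms by simp
  then have "(norm (y_seq k - p))\<^sup>2
      = dist_sq k + w k * (dist_sq k - dist_sq (k - 1)) + (w k + (w k)\<^sup>2) * step_sq (k - 1)"
    using y_seq_on_tail[OF assms] False
    by (simp add: power2_norm_extrapolate dist_sq_def step_sq_def)
  also have "w k * (dist_sq k - dist_sq (k - 1)) \<le> om * dist_sq_increase k"
  proof -
    have "w k * (dist_sq k - dist_sq (k - 1)) \<le> w k * dist_sq_increase k"
      using w by (intro mult_left_mono) (auto simp: dist_sq_increase_def)
    also have "\<dots> \<le> om * dist_sq_increase k"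
      using w by (intro mult_right_mono) (auto simp: dist_sq_increase_def)
    finally show ?thesis .
  qed
  also have "(w k + (w k)\<^sup>2) * step_sq (k - 1) \<le> 2 * step_sq (k - 1)"
  proof (rule mult_right_mono)
    have "w k \<le> 1"
      using w om by simp
    with w show "w k + (w k)\<^sup>2 \<le> 2"
      using power_le_one[of "w k" 2] by simp
  qed (simp add: step_sq_def)
  finally show ?thesis
    by simp
qed

lemma dist_sq_increase_le:
  assumes "Suc K \<le> k"
  shows "dist_sq_increase (Suc k) \<le> om * dist_sq_increase k + 2 * step_sq (k - 1)"
  using dist_sq_Suc_le[of k] norm_y_seq_minus_p_le[OF assms] assms om_pos
  by (simp add: dist_sq_increase_def step_sq_def)

lemma summable_step_sq: "summable step_sq"
proof -
  have "summable (\<lambda>n. step_sq (n + K))"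
  proof (rule summable_of_contractive_bound)
    have "summable (\<lambda>n. residual_sq (n + Suc K))"
      by (subst summable_iff_shift) (simp add: residual_sq_def[abs_def] summable_residual)
    then show "summable (\<lambda>n. residual_sq (n + Suc K) / (1 - om))"
      by (rule summable_divide)
    show "step_sq (Suc n + K) \<le> om * step_sq (n + K) + residual_sq (n + Suc K) / (1 - om)" for n
      using step_sq_le[of "Suc n + K"] by simp
  qed (use om om_pos in \<open>auto simp: step_sq_def residual_sq_def\<close>)
  then show ?thesis
    by (rule summable_iff_shift[THEN iffD1])
qed

lemma summable_dist_sq_increase: "summable dist_sq_increase"
proof -
  have "summable (\<lambda>n. dist_sq_increase (n + Suc K))"
  proof (rule summable_of_contractive_bound)
    show "summable (\<lambda>n. 2 * step_sq (n + K))"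
      using summable_step_sq by simp
    show "dist_sq_increase (Suc n + Suc K) \<le> om * dist_sq_increase (n + Suc K) + 2 * step_sq (n + K)" for n
      using dist_sq_increase_le[of "n + Suc K"] by simp
  qed (use om om_pos in \<open>auto simp: step_sq_def dist_sq_increase_def\<close>)
  then show ?thesis
    by (rule summable_iff_shift[THEN iffD1])
qed

lemma x_tendsto: "x \<longlonglongrightarrow> p"
proof -
  have "convergent dist_sq"
  proof (rule convergent_of_summable_increments)
    show "summable (\<lambda>n. dist_sq_increase (Suc n))"
      using summable_dist_sq_increase by (simp add: summable_Suc_iff)
  qed (auto simp: dist_sq_def dist_sq_increase_def)
  then obtain d where d: "dist_sq \<longlonglongrightarrow> d"
    by (auto simp: convergent_def)
  have "(\<lambda>j. (norm (x (r j) - p))\<^sup>2) \<longlonglongrightarrow> (norm (p - p))\<^sup>2"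
    by (intro tendsto_intros x_r_tendsto)
  then have "(dist_sq \<circ> r) \<longlonglongrightarrow> 0"
    by (simp add: dist_sq_def o_def)
  with LIMSEQ_subseq_LIMSEQ[OF d r] have "d = 0"
    using LIMSEQ_unique by blast
  with d have "(\<lambda>k. sqrt (dist_sq k)) \<longlonglongrightarrow> sqrt 0"
    by (intro tendsto_real_sqrt) simp
  then have "(\<lambda>k. norm (x k - p)) \<longlonglongrightarrow> 0"
    by (simp add: dist_sq_def)
  then have "(\<lambda>k. x k - p) \<longlonglongrightarrow> 0"
    using tendsto_norm_zero_iff by blast
  then show ?thesis
    by (rule LIM_zero_cancel)
qed

end

theorem theorem2p6:
  fixes lam L mu om :: real and l u :: "real^'n" and f :: "real^'n \<Rightarrow> real"
    and g :: "real^'n \<Rightarrow> real^'n" and w :: "nat \<Rightarrow> real" and x :: "nat \<Rightarrow> real^'n"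
  assumes lam: "lam > 0"
    and lu: "\<forall>i. l $ i \<le> u $ i"
    and cvx: "convex_on UNIV f"
    and grad: "\<forall>z. (f has_derivative (\<lambda>h. inner (g z) h)) (at z)"
    and bdd: "\<exists>c. \<forall>z \<in> box_set l u. c \<le> f z"
    and L: "L > 0"
    and lip: "\<forall>z1 \<in> box_set l u. \<forall>z2 \<in> box_set l u. norm (g z1 - g z2) \<le> L * norm (z1 - z2)"
    and mu: "mu > 0"
    and om: "om < 1"
    and w: "\<forall>k. 0 \<le> w k \<and> w k \<le> om"
    and alg: "alg1_seq lam g l u L mu w x"
  shows "bounded (range x)
    \<and> (\<forall>p. cluster_point x p \<longrightarrow> local_minimizer (Hfun lam f l u) (box_set l u) p)
    \<and> (\<forall>p. cluster_point x p \<longrightarrow> ((\<lambda>k. Hfun lam f l u (x k)) \<longlonglongrightarrow> Hfun lam f l u p))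
    \<and> ((\<forall>k. w k = om) \<and> 0 < om \<longrightarrow>
         (\<exists>p. x \<longlonglongrightarrow> p \<and> local_minimizer (Hfun lam f l u) (box_set l u) p))"
proof -
  interpret alg1_run lam L mu om l u f g w x
    by (rule alg1_run.intro) (rule assms)+
  obtain K where "\<And>m. K \<le> m \<Longrightarrow> supp_vec (x m) = supp_vec (x K)"
    using eventually_supp_vec_constant by blast
  then interpret alg1_stable_support lam L mu om l u f g w x K
    by (intro alg1_stable_support.intro alg1_run_axioms alg1_stable_support_axioms.intro)
  have cluster: "local_minimizer (Hfun lam f l u) X p \<and> (\<lambda>k. Hfun lam f l u (x k)) \<longlonglongrightarrow> Hfun lam f l u p"
    if "strict_mono r" "(x \<circ> r) \<longlonglongrightarrow> p" for p r
  proof -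
    interpret alg1_cluster lam L mu om l u f g w x K p r
      by (intro alg1_cluster.intro alg1_stable_support_axioms alg1_cluster_axioms.intro that)
    show ?thesis
      using local_minimizer_p Hfun_x_tendsto by blast
  qed
  have "\<exists>p. x \<longlonglongrightarrow> p \<and> local_minimizer (Hfun lam f l u) X p" if "0 < om"
  proof -
    obtain p r where "strict_mono r" "(x \<circ> r) \<longlonglongrightarrow> p"
      using compact_imp_seq_compact[OF compact_box_set[of l u]] x_in_box unfolding seq_compact_def by blast
    then interpret alg1_inertial lam L mu om l u f g w x K p r
      by (intro alg1_inertial.intro alg1_cluster.intro alg1_stable_support_axioms
          alg1_cluster_axioms.intro alg1_inertial_axioms.intro \<open>0 < om\<close>)
    show ?thesis
      using x_tendsto local_minimizer_p by blast
  qed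
  moreover have "bounded (range x)"
    using bounded_subset[OF compact_imp_bounded[OF compact_box_set[of l u]]] x_in_box by blast
  ultimately show ?thesis
    using cluster unfolding cluster_point_def by blast
qed

end
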